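(* Let $n\geq 2$ and let $C$ be a $2$-null CRC in $G_n$ with covering radius $\rho\geq 2$, $c_1\leq 2$, $c_2=3$, and $\mathbf{0}\in C$. Then: (1) every cap contains at most one word of $C$; in particular $C$ contains at most $2n$ words of type $3100$; (2) every word of type $1100$ lying in $C_2$ is at distance two from exactly one word of weight four in $C$, and this word is of type $3100$.
   Context: $G_n$: vertex set $\mathbb{Z}^n$, $x\sim y$ iff $\sum_i|x_i-y_i|=1$; $d$ its distance; weight of $x$ is $d(x,\mathbf{0})$; $e_i$ is the $i$-th unit vector. For a code $C$ with covering radius $\rho$, $C_i=\{v:d(v,C)=i\}$. $C$ is a CRC if for all $i,j$ every vertex of $C_i$ has the same number $\alpha_{ij}$ of neighbours in $C_j$, with $\alpha_{ij}=0$ for $|i-j|>1$; $a_i=\alpha_{ii}$, $b_i=\alpha_{i,i+1}$, $c_i=\alpha_{i,i-1}$. $C$ is $r$-null if $a_0=\cdots=a_{r-1}=0$. The type of a word of weight at most four is the nonincreasing sequence of its four largest absolute entry values; type $1100$: exactly two entries $\pm1$, others $0$; type $3100$: one entry $\pm3$, one entry $\pm1$, others $0$. A cap is one of the $2n$ sets $\{\varepsilon 3e_i\pm e_j: j\in\{1,\ldots,n\}\setminus\{i\}\}$ for $i\in\{1,\ldots,n\}$, $\varepsilon\in\{1,-1\}$; the set of type $3100$ words is the disjoint union of the caps. *)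

theory Defs
  imports Main
begin

text \<open>Vertices of G_n: integer vectors x :: nat => int supported on {0..<n}
  (coordinates are 0-indexed: coordinate i in the paper is index i-1 here).\<close>

definition verts :: "nat \<Rightarrow> (nat \<Rightarrow> int) set" where
  "verts n = {x. \<forall>i\<ge>n. x i = 0}"

text \<open>Distance of G_n (the graph distance of the grid Z^n is the l1 distance).\<close>
definition gdist :: "nat \<Rightarrow> (nat \<Rightarrow> int) \<Rightarrow> (nat \<Rightarrow> int) \<Rightarrow> nat" where
  "gdist n x y = nat (\<Sum>i<n. \<bar>x i - y i\<bar>)"

definition adj :: "nat \<Rightarrow> (nat \<Rightarrow> int) \<Rightarrow> (nat \<Rightarrow> int) \<Rightarrow> bool" where
  "adj n x y \<longleftrightarrow> (\<Sum>i<n. \<bar>x i - y i\<bar>) = 1"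

definition zerov :: "nat \<Rightarrow> int" where
  "zerov = (\<lambda>_. 0)"

definition unitv :: "nat \<Rightarrow> nat \<Rightarrow> int" where
  "unitv i = (\<lambda>k. if k = i then 1 else 0)"

definition weight :: "nat \<Rightarrow> (nat \<Rightarrow> int) \<Rightarrow> nat" where
  "weight n x = gdist n x zerov"

definition distC :: "nat \<Rightarrow> (nat \<Rightarrow> int) set \<Rightarrow> (nat \<Rightarrow> int) \<Rightarrow> nat" where
  "distC n C v = (LEAST k. \<exists>c\<in>C. gdist n v c = k)"

definition layer :: "nat \<Rightarrow> (nat \<Rightarrow> int) set \<Rightarrow> nat \<Rightarrow> (nat \<Rightarrow> int) set" where
  "layer n C i = {v \<in> verts n. distC n C v = i}"

definition covering_radius :: "nat \<Rightarrow> (nat \<Rightarrow> int) set \<Rightarrow> nat \<Rightarrow> bool" where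
  "covering_radius n C \<rho> \<longleftrightarrow>
     (\<forall>v\<in>verts n. distC n C v \<le> \<rho>) \<and> (\<exists>v\<in>verts n. distC n C v = \<rho>)"

definition is_CRC :: "nat \<Rightarrow> (nat \<Rightarrow> int) set \<Rightarrow> nat \<Rightarrow> (nat \<Rightarrow> nat \<Rightarrow> nat) \<Rightarrow> bool" where
  "is_CRC n C \<rho> \<alpha> \<longleftrightarrow>
     C \<subseteq> verts n \<and> C \<noteq> {} \<and> covering_radius n C \<rho> \<and>
     (\<forall>i j. \<forall>v\<in>layer n C i. card {w \<in> verts n. adj n v w \<and> w \<in> layer n C j} = \<alpha> i j) \<and>
     (\<forall>i j. (i > j + 1 \<or> j > i + 1) \<longrightarrow> \<alpha> i j = 0)"

text \<open>r-null: a_0 = ... = a_(r-1) = 0.\<close>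
definition r_null :: "nat \<Rightarrow> (nat \<Rightarrow> nat \<Rightarrow> nat) \<Rightarrow> bool" where
  "r_null r \<alpha> \<longleftrightarrow> (\<forall>i<r. \<alpha> i i = 0)"

definition type1100 :: "nat \<Rightarrow> (nat \<Rightarrow> int) \<Rightarrow> bool" where
  "type1100 n x \<longleftrightarrow> x \<in> verts n \<and>
     (\<exists>i j. i < n \<and> j < n \<and> i \<noteq> j \<and> \<bar>x i\<bar> = 1 \<and> \<bar>x j\<bar> = 1 \<and>
        (\<forall>k. k \<noteq> i \<and> k \<noteq> j \<longrightarrow> x k = 0))"

definition type3100 :: "nat \<Rightarrow> (nat \<Rightarrow> int) \<Rightarrow> bool" where
  "type3100 n x \<longleftrightarrow> x \<in> verts n \<and>
     (\<exists>i j. i < n \<and> j < n \<and> i \<noteq> j \<and> \<bar>x i\<bar> = 3 \<and> \<bar>x j\<bar> = 1 \<and>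
        (\<forall>k. k \<noteq> i \<and> k \<noteq> j \<longrightarrow> x k = 0))"

definition cap :: "nat \<Rightarrow> nat \<Rightarrow> int \<Rightarrow> (nat \<Rightarrow> int) set" where
  "cap n i \<epsilon> = {(\<lambda>k. \<epsilon> * 3 * unitv i k + s * unitv j k) | j s. j < n \<and> j \<noteq> i \<and> (s = 1 \<or> s = -1)}"

end

theory Submission
  imports Defs "HOL-Library.Function_Algebras"
begin

text \<open>
  All arguments count neighbours around \<open>0 \<in> C\<close>. As \<open>a\<^sub>0 = a\<^sub>1 = 0\<close>, unit vectors lie in \<open>C\<^sub>1\<close> and no codeword has weight 1
  or 3, so a weight-2 vertex outside \<open>C\<close> lies in \<open>C\<^sub>2\<close> and has exactly \<open>c\<^sub>2 = 3\<close>
  neighbours in \<open>C\<^sub>1\<close>; and since \<open>c\<^sub>1 \<le> 2\<close>, a unit vector has at most one codeword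
  neighbour besides \<open>0\<close>. The basic move is an exchange: if \<open>x \<in> C\<^sub>2\<close> has
  \<open>C\<^sub>1\<close>-neighbours \<open>a, b, y\<close>, \<open>x = p + q\<close> with \<open>q\<close> a unit vector and \<open>d\<close> a codeword next
  to \<open>p\<close>, then \<open>d + q\<close> is a \<open>C\<^sub>1\<close>-neighbour of \<open>x\<close>, so \<open>d \<in> {a - q, b - q, y - q}\<close>.

  Exchanges rule out codewords \<open>\<plusminus>2e\<^sub>k\<close> and \<open>\<plusminus>e\<^sub>i \<plusminus> e\<^sub>j \<plusminus> 2e\<^sub>k\<close>. Two codewords
  \<open>3\<epsilon>e\<^sub>i + s e\<^sub>j\<close> in one cap would give \<open>2\<epsilon>e\<^sub>i \<in> C\<^sub>2\<close> four \<open>C\<^sub>1\<close>-neighbours.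
  For \<open>x = a + b\<close> of type 1100 in \<open>C\<^sub>2\<close> with third \<open>C\<^sub>1\<close>-neighbour \<open>y = x + u\<close>, neither
  \<open>a + u\<close> nor \<open>b + u\<close> is a codeword, so \<open>y + u\<close> is the only codeword next to \<open>y\<close>; every
  codeword of weight 4 at distance 2 from \<open>x\<close> is reached through \<open>y\<close>, so it is \<open>x + 2u\<close>,
  which has type 3100 because \<open>u\<close> cannot point in a third direction.
\<close>

definition axis :: "nat \<Rightarrow> int \<Rightarrow> nat \<Rightarrow> int" where
  "axis k s = (\<lambda>m. if m = k then s else 0)"

definition norm1 :: "nat \<Rightarrow> (nat \<Rightarrow> int) \<Rightarrow> int" where
  "norm1 n v = (\<Sum>i<n. \<bar>v i\<bar>)"

definition nbrs_in :: "nat \<Rightarrow> (nat \<Rightarrow> int) \<Rightarrow> (nat \<Rightarrow> int) set \<Rightarrow> (nat \<Rightarrow> int) set" where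
  "nbrs_in n v S = {w \<in> verts n. adj n v w \<and> w \<in> S}"

lemma axis_apply: "axis k s m = (if m = k then s else 0)"
  by (simp add: axis_def)

lemma distinct_if_distinct_map: "distinct (map f xs) \<Longrightarrow> distinct xs"
  by (simp add: distinct_map)

lemma apply_neq_imp_neq: "f i \<noteq> g i \<Longrightarrow> f \<noteq> g"
  by auto

lemma zerov_eq_0: "zerov = 0"
  by (simp add: zerov_def fun_eq_iff)

lemma verts_0 [simp]: "0 \<in> verts n"
  and verts_add [simp]: "x \<in> verts n \<Longrightarrow> y \<in> verts n \<Longrightarrow> x + y \<in> verts n"
  and verts_diff [simp]: "x \<in> verts n \<Longrightarrow> y \<in> verts n \<Longrightarrow> x - y \<in> verts n"
  and axis_in_verts [simp]: "k < n \<Longrightarrow> axis k s \<in> verts n"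
  by (simp_all add: verts_def axis_def)

lemma axis_add_axis [simp]: "axis k s + axis k t = axis k (s + t)"
  and axis_diff_axis [simp]: "axis k s - axis k t = axis k (s - t)"
  and uminus_axis [simp]: "- axis k s = axis k (- s)"
  and axis_0 [simp]: "axis k 0 = 0"
  by (simp_all add: fun_eq_iff axis_def)

lemma axis_eq_0_iff [simp]: "axis k s = 0 \<longleftrightarrow> s = 0"
  by (auto simp: fun_eq_iff axis_def)

lemma axis_eq_axis_iff [simp]: "axis i s = axis j t \<longleftrightarrow> s = t \<and> (i = j \<or> s = 0)"
  by (auto simp: fun_eq_iff axis_def)

lemma axis_add_axis_eq_0_iff [simp]: "i \<noteq> k \<Longrightarrow> axis i s + axis k t = 0 \<longleftrightarrow> s = 0 \<and> t = 0"
  by (auto simp: fun_eq_iff axis_def)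

lemma type1100E:
  assumes "type1100 n x"
  obtains i j si sj where "i < n" "j < n" "i \<noteq> j" "\<bar>si\<bar> = 1" "\<bar>sj\<bar> = 1"
    "x = axis i si + axis j sj"
proof -
  obtain i j where ij: "i < n" "j < n" "i \<noteq> j" "\<bar>x i\<bar> = 1" "\<bar>x j\<bar> = 1"
    and "\<forall>m. m \<noteq> i \<and> m \<noteq> j \<longrightarrow> x m = 0"
    using assms unfolding type1100_def by blast
  then have "x = axis i (x i) + axis j (x j)"
    by (auto simp: fun_eq_iff axis_apply)
  with ij show ?thesis
    using that by blast
qed

lemma type3100_axis_3_1:
  "i < n \<Longrightarrow> j < n \<Longrightarrow> i \<noteq> j \<Longrightarrow> \<bar>s\<bar> = 1 \<Longrightarrow> \<bar>t\<bar> = 1 \<Longrightarrow> type3100 n (axis i (3 * s) + axis j t)"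
  unfolding type3100_def by (intro conjI exI[of _ i] exI[of _ j]) (auto simp: axis_apply abs_mult)

lemma norm1_nonneg: "norm1 n v \<ge> 0"
  unfolding norm1_def by (simp add: sum_nonneg)

lemma norm1_minus_commute: "norm1 n (x - y) = norm1 n (y - x)"
  unfolding norm1_def by (simp add: abs_minus_commute)

lemma norm1_uminus [simp]: "norm1 n (- x) = norm1 n x"
  unfolding norm1_def by simp

lemma gdist_eq_norm1: "gdist n x y = nat (norm1 n (x - y))"
  unfolding gdist_def norm1_def by simp

lemma weight_eq_norm1: "weight n x = nat (norm1 n x)"
  unfolding weight_def gdist_eq_norm1 zerov_eq_0 by simp

lemma adj_iff_norm1: "adj n x y \<longleftrightarrow> norm1 n (y - x) = 1"
  unfolding adj_def norm1_def by (simp add: abs_minus_commute)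

lemma norm1_add_axis:
  assumes "k < n"
  shows "norm1 n (x + axis k s) = norm1 n x - \<bar>x k\<bar> + \<bar>x k + s\<bar>"
proof -
  have "(\<Sum>i\<in>{..<n} - {k}. \<bar>(x + axis k s) i\<bar>) = (\<Sum>i\<in>{..<n} - {k}. \<bar>x i\<bar>)"
    by (rule sum.cong) (auto simp: axis_apply)
  then have "norm1 n (x + axis k s) - \<bar>x k + s\<bar> = (\<Sum>i\<in>{..<n} - {k}. \<bar>x i\<bar>)"
    using assms unfolding norm1_def by (simp add: sum.remove[of "{..<n}" k] axis_apply)
  moreover have "norm1 n x - \<bar>x k\<bar> = (\<Sum>i\<in>{..<n} - {k}. \<bar>x i\<bar>)"
    using assms unfolding norm1_def by (simp add: sum.remove[of "{..<n}" k])
  ultimately show ?thesis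
    by simp
qed

lemma norm1_axis [simp]: "k < n \<Longrightarrow> norm1 n (axis k s) = \<bar>s\<bar>"
  using norm1_add_axis[of k n 0 s] by (simp add: norm1_def)

lemma norm1_axis_add_axis:
  "k < n \<Longrightarrow> j < n \<Longrightarrow> j \<noteq> k \<Longrightarrow> norm1 n (axis k s + axis j t) = \<bar>s\<bar> + \<bar>t\<bar>"
  by (simp add: norm1_add_axis axis_apply)

lemma norm1_eq_0_iff:
  assumes "v \<in> verts n"
  shows "norm1 n v = 0 \<longleftrightarrow> v = 0"
proof
  assume "norm1 n v = 0"
  then have "\<forall>i<n. v i = 0"
    unfolding norm1_def by (subst (asm) sum_nonneg_eq_0_iff) auto
  with assms show "v = 0"
    by (auto simp: verts_def fun_eq_iff) (metis not_le)
qed (simp add: norm1_def)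

lemma norm1_decrease_by_axis:
  assumes "v \<in> verts n" "v \<noteq> 0"
  obtains k s where "k < n" "\<bar>s\<bar> = 1" "norm1 n (v + axis k s) = norm1 n v - 1"
proof -
  obtain k where "v k \<noteq> 0"
    using assms(2) by (auto simp: fun_eq_iff)
  moreover from this assms(1) have "k < n"
    unfolding verts_def using not_less by blast
  ultimately show ?thesis
    using that[of k "- sgn (v k)"] norm1_add_axis[of k n v "- sgn (v k)"]
    by (auto simp: abs_if sgn_if)
qed

lemma norm1_eq_1_imp_axis:
  assumes "u \<in> verts n" "norm1 n u = 1"
  obtains k s where "k < n" "\<bar>s\<bar> = 1" "u = axis k s"
proof -
  have "u \<noteq> 0"
    using assms(2) by (auto simp: norm1_def)
  then obtain k s where ks: "k < n" "\<bar>s\<bar> = 1" "norm1 n (u + axis k s) = 0"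
    using norm1_decrease_by_axis[OF assms(1)] assms(2) by (metis diff_self)
  then have "u + axis k s = 0"
    using assms(1) norm1_eq_0_iff by simp
  then have "u = axis k (- s)"
    by (simp add: fun_eq_iff axis_apply add_eq_0_iff2)
  with ks show ?thesis
    using that[of k "- s"] by simp
qed

lemma adj_add_axis: "k < n \<Longrightarrow> \<bar>s\<bar> = 1 \<Longrightarrow> adj n x (x + axis k s)"
  by (simp add: adj_iff_norm1)

lemma adjE:
  assumes "adj n x y" "x \<in> verts n" "y \<in> verts n"
  obtains k s where "k < n" "\<bar>s\<bar> = 1" "y = x + axis k s"
proof -
  obtain k s where "k < n" "\<bar>s\<bar> = 1" "y - x = axis k s"
    using norm1_eq_1_imp_axis[of "y - x" n] assms by (auto simp: adj_iff_norm1)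
  then show ?thesis
    using that by (simp add: algebra_simps)
qed

lemma norm1_adj:
  assumes "adj n x y" "x \<in> verts n" "y \<in> verts n"
  shows "norm1 n y = norm1 n x + 1 \<or> norm1 n y = norm1 n x - 1"
proof -
  obtain k s where "k < n" "\<bar>s\<bar> = 1" "y = x + axis k s"
    using adjE[OF assms] .
  moreover from \<open>\<bar>s\<bar> = 1\<close> have "\<bar>x k + s\<bar> = \<bar>x k\<bar> + 1 \<or> \<bar>x k + s\<bar> = \<bar>x k\<bar> - 1"
    by arith
  ultimately show ?thesis
    using norm1_add_axis[of k n x s] by auto
qed

lemma finite_nbrs_in: "x \<in> verts n \<Longrightarrow> finite (nbrs_in n x S)"
proof -
  assume x: "x \<in> verts n"
  have "nbrs_in n x S \<subseteq> (\<lambda>(k, s). x + axis k s) ` ({..<n} \<times> {1, -1})"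
  proof
    fix y assume "y \<in> nbrs_in n x S"
    then obtain k s where "k < n" "\<bar>s\<bar> = 1" "y = x + axis k s"
      using adjE[of n x y] x by (auto simp: nbrs_in_def)
    then show "y \<in> (\<lambda>(k, s). x + axis k s) ` ({..<n} \<times> {1, -1})"
      by (auto simp: abs_if split: if_splits)
  qed
  then show ?thesis
    by (rule finite_subset) simp
qed

lemma gdist_eq_0_iff: "x \<in> verts n \<Longrightarrow> y \<in> verts n \<Longrightarrow> gdist n x y = 0 \<longleftrightarrow> x = y"
  using norm1_eq_0_iff[of "x - y" n] norm1_nonneg[of n "x - y"]
  by (simp add: gdist_eq_norm1)

lemma gdist_eq_1_iff: "gdist n x y = 1 \<longleftrightarrow> adj n x y"
  using norm1_nonneg[of n "x - y"]
  by (simp add: gdist_eq_norm1 adj_iff_norm1 norm1_minus_commute nat_eq_iff)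

lemma gdist_eq_2_midpoint:
  assumes "gdist n x y = 2" "x \<in> verts n" "y \<in> verts n"
  obtains z where "z \<in> verts n" "adj n x z" "adj n z y"
proof -
  have "norm1 n (y - x) = 2"
    using assms(1) norm1_nonneg[of n "x - y"] by (simp add: gdist_eq_norm1 norm1_minus_commute nat_eq_iff)
  moreover from this have "y - x \<noteq> 0"
    by (auto simp: norm1_def)
  moreover have "y - x \<in> verts n"
    using assms(2,3) by simp
  ultimately obtain k s where ks: "k < n" "\<bar>s\<bar> = 1" "norm1 n (y - x + axis k s) = 1"
    using norm1_decrease_by_axis[of "y - x" n] by force
  show ?thesis
  proof (rule that)
    show "x + axis k (- s) \<in> verts n" "adj n x (x + axis k (- s))"
      using ks assms(2) by (simp_all add: adj_add_axis)
    have "y - (x + axis k (- s)) = y - x + axis k s"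
      by (simp add: fun_eq_iff axis_apply)
    with ks(3) show "adj n (x + axis k (- s)) y"
      unfolding adj_iff_norm1 by (simp only:)
  qed
qed

locale grid_code =
  fixes n :: nat and C :: "(nat \<Rightarrow> int) set"
  assumes code_subset_verts: "C \<subseteq> verts n" and code_nonempty: "C \<noteq> {}"
begin

lemma distC_eq_iff:
  "distC n C v = i \<longleftrightarrow> (\<exists>c\<in>C. gdist n v c = i) \<and> (\<forall>c\<in>C. i \<le> gdist n v c)"
proof
  assume i: "distC n C v = i"
  have "\<exists>c\<in>C. gdist n v c = distC n C v"
    unfolding distC_def by (rule LeastI_ex) (use code_nonempty in blast)
  moreover have "distC n C v \<le> gdist n v c" if "c \<in> C" for c
    unfolding distC_def by (rule Least_le) (use that in blast)
  ultimately show "(\<exists>c\<in>C. gdist n v c = i) \<and> (\<forall>c\<in>C. i \<le> gdist n v c)"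
    using i by blast
next
  assume "(\<exists>c\<in>C. gdist n v c = i) \<and> (\<forall>c\<in>C. i \<le> gdist n v c)"
  then show "distC n C v = i"
    unfolding distC_def by (intro Least_equality) auto
qed

lemma layer_0: "layer n C 0 = C"
  using code_subset_verts gdist_eq_0_iff
  by (auto simp: layer_def distC_eq_iff subset_iff)

lemma mem_layer_1_iff:
  "v \<in> layer n C 1 \<longleftrightarrow> v \<in> verts n \<and> v \<notin> C \<and> (\<exists>c\<in>C. adj n v c)"
proof -
  have "1 \<le> gdist n v c \<longleftrightarrow> v \<noteq> c" if "v \<in> verts n" "c \<in> C" for c
    using that code_subset_verts gdist_eq_0_iff[of v n c] by auto
  then show ?thesis
    by (auto simp: layer_def distC_eq_iff gdist_eq_1_iff[unfolded One_nat_def])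
qed

lemma mem_layer_2_iff:
  "v \<in> layer n C 2 \<longleftrightarrow>
     v \<in> verts n \<and> v \<notin> C \<and> (\<forall>c\<in>C. \<not> adj n v c) \<and> (\<exists>c\<in>C. gdist n v c = 2)"
proof -
  have "2 \<le> gdist n v c \<longleftrightarrow> v \<noteq> c \<and> \<not> adj n v c" if "v \<in> verts n" "c \<in> C" for c
    using that code_subset_verts gdist_eq_0_iff[of v n c] gdist_eq_1_iff[of n v c] by auto
  then show ?thesis
    by (auto simp: layer_def distC_eq_iff)
qed

lemma layer_subset_verts: "layer n C i \<subseteq> verts n"
  by (auto simp: layer_def)

lemma code_verts: "c \<in> C \<Longrightarrow> c \<in> verts n"
  using code_subset_verts by blast

end

locale crc = grid_code +
  fixes \<alpha> :: "nat \<Rightarrow> nat \<Rightarrow> nat"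
  assumes card_nbrs_in_layer: "v \<in> layer n C i \<Longrightarrow> card (nbrs_in n v (layer n C j)) = \<alpha> i j"
begin

lemma card_le_intersection_number:
  assumes "v \<in> layer n C i" "A \<subseteq> nbrs_in n v (layer n C j)"
  shows "card A \<le> \<alpha> i j"
  using card_mono[OF finite_nbrs_in assms(2)] assms(1) layer_subset_verts
  by (auto simp: card_nbrs_in_layer)

lemma nbrs_in_layer_eqI:
  assumes "v \<in> layer n C i" "A \<subseteq> nbrs_in n v (layer n C j)" "card A = \<alpha> i j"
  shows "nbrs_in n v (layer n C j) = A"
  using card_subset_eq[OF finite_nbrs_in assms(2)] assms layer_subset_verts
  by (auto simp: card_nbrs_in_layer)

lemma layer_nonadjacent:
  assumes "\<alpha> i i = 0" "v \<in> layer n C i" "w \<in> layer n C i"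
  shows "\<not> adj n v w"
proof
  assume "adj n v w"
  with assms(3) have "{w} \<subseteq> nbrs_in n v (layer n C i)"
    using layer_subset_verts by (auto simp: nbrs_in_def)
  from card_le_intersection_number[OF assms(2) this] assms(1) show False
    by simp
qed

lemma codeword_nbr_imp_layer_1:
  assumes "\<alpha> 0 0 = 0" "w \<in> verts n" "c \<in> C" "adj n w c"
  shows "w \<in> layer n C 1"
  unfolding mem_layer_1_iff using layer_nonadjacent[OF assms(1), of w c] assms
  by (auto simp: layer_0)

lemma second_codeword_nbr:
  assumes "v' \<in> layer n C 1" "c1 \<in> C" "c2 \<in> C" "c1 \<noteq> c2" "adj n v' c1" "adj n v' c2"
    and "v \<in> layer n C 1" "c \<in> C" "adj n v c"
  obtains d where "d \<in> C" "adj n v d" "d \<noteq> c"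
proof -
  have "{c1, c2} \<subseteq> nbrs_in n v' (layer n C 0)"
    using assms code_subset_verts by (auto simp: nbrs_in_def layer_0)
  from card_le_intersection_number[OF assms(1) this] assms(4) have "2 \<le> \<alpha> 1 0"
    by simp
  moreover have "card (nbrs_in n v (layer n C 0)) \<le> 1" if "nbrs_in n v (layer n C 0) \<subseteq> {c}"
    using card_mono[OF _ that] by simp
  ultimately have "\<not> nbrs_in n v (layer n C 0) \<subseteq> {c}"
    using card_nbrs_in_layer[OF assms(7), of 0] by linarith
  then show ?thesis
    using that by (auto simp: nbrs_in_def layer_0)
qed

end

locale two_null_crc = crc +
  assumes two_le_n: "2 \<le> n"
    and a0: "\<alpha> 0 0 = 0" and a1: "\<alpha> 1 1 = 0"
    and c1_le_2: "\<alpha> 1 0 \<le> 2" and c2: "\<alpha> 2 1 = 3"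
    and zero_in_code: "0 \<in> C"
begin

lemmas adj_codeword_imp_layer_1 = codeword_nbr_imp_layer_1[OF a0]

lemma layer_1_if_add_axis_in_code:
  "w \<in> verts n \<Longrightarrow> w + axis k s \<in> C \<Longrightarrow> k < n \<Longrightarrow> \<bar>s\<bar> = 1 \<Longrightarrow> w \<in> layer n C 1"
  by (rule adj_codeword_imp_layer_1) (auto intro: adj_add_axis)

lemma axis_in_layer_1: "k < n \<Longrightarrow> \<bar>s\<bar> = 1 \<Longrightarrow> axis k s \<in> layer n C 1"
  by (rule adj_codeword_imp_layer_1[OF _ zero_in_code]) (simp_all add: adj_iff_norm1)

lemma axis_codeword_nbrs_eq:
  assumes "k < n" "\<bar>t\<bar> = 1" "c \<in> C" "c' \<in> C" "adj n (axis k t) c" "adj n (axis k t) c'"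
    and "c \<noteq> 0" "c' \<noteq> 0"
  shows "c = c'"
proof (rule ccontr)
  assume "c \<noteq> c'"
  have "{0, c, c'} \<subseteq> nbrs_in n (axis k t) (layer n C 0)"
    using assms zero_in_code code_verts by (simp add: layer_0 nbrs_in_def adj_iff_norm1)
  from card_le_intersection_number[OF axis_in_layer_1[OF assms(1,2)] this] c1_le_2
  have "card {0, c, c'} \<le> 2"
    by simp
  with \<open>c \<noteq> c'\<close> assms(7,8) show False
    by simp
qed

lemma no_four_layer_1_nbrs:
  assumes "x \<in> layer n C 2" "distinct [p, q, r, w]" "{p, q, r, w} \<subseteq> nbrs_in n x (layer n C 1)"
  shows False
  using card_le_intersection_number[OF assms(1,3)] assms(2) c2 by simp

lemma layer_1_nbrs_of_layer_2:
  assumes "x \<in> layer n C 2" "distinct [a, b, y]" "{a, b, y} \<subseteq> nbrs_in n x (layer n C 1)"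
  shows "nbrs_in n x (layer n C 1) = {a, b, y}"
  using nbrs_in_layer_eqI[OF assms(1,3)] assms(2) c2 by simp

lemma third_layer_1_nbr:
  assumes "x \<in> layer n C 2"
  obtains y where "y \<in> nbrs_in n x (layer n C 1)" "y \<noteq> a" "y \<noteq> b"
proof -
  have "card (nbrs_in n x (layer n C 1)) \<le> 2" if "nbrs_in n x (layer n C 1) \<subseteq> {a, b}"
    using card_mono[OF _ that] by (simp add: card_insert_if split: if_splits)
  then have "\<not> nbrs_in n x (layer n C 1) \<subseteq> {a, b}"
    using card_nbrs_in_layer[OF assms, of 1] c2 by linarith
  then show ?thesis
    using that by blast
qed

lemma codeword_norm1_ne_1: "c \<in> C \<Longrightarrow> norm1 n c \<noteq> 1"
  using layer_nonadjacent[OF a0, of 0 c] zero_in_code by (auto simp: layer_0 adj_iff_norm1)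

text \<open>A codeword of weight 3 would give an edge inside \<open>C\<^sub>1\<close>: its neighbour
  of weight 2 and a common neighbour of that vertex and \<open>0\<close>.\<close>
lemma codeword_norm1_ne_3:
  assumes "c \<in> C"
  shows "norm1 n c \<noteq> 3"
proof
  assume c3: "norm1 n c = 3"
  have "c \<noteq> 0"
    using c3 by (auto simp: norm1_def)
  then obtain k s where ks: "k < n" "\<bar>s\<bar> = 1" "norm1 n (c + axis k s) = norm1 n c - 1"
    using norm1_decrease_by_axis[OF code_verts[OF assms]] by blast
  define z where "z = c + axis k s"
  have z: "z \<in> verts n" "adj n z c"
    using ks code_verts[OF assms] by (simp_all add: z_def adj_iff_norm1)
  have "gdist n z 0 = 2"
    using ks(3) c3 by (simp add: z_def gdist_eq_norm1)
  then obtain z' where z': "z' \<in> verts n" "adj n z z'" "adj n z' 0"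
    using gdist_eq_2_midpoint[OF _ z(1) verts_0] by blast
  have "z \<in> layer n C 1" "z' \<in> layer n C 1"
    using adj_codeword_imp_layer_1 z z' zero_in_code assms by blast+
  then show False
    using layer_nonadjacent[OF a1] z'(2) by blast
qed

lemma norm1_2_imp_layer_2:
  assumes "v \<in> verts n" "norm1 n v = 2" "v \<notin> C"
  shows "v \<in> layer n C 2"
  unfolding mem_layer_2_iff
proof (intro conjI bexI ballI notI)
  fix c assume "c \<in> C" "adj n v c"
  then have "norm1 n c = 1 \<or> norm1 n c = 3"
    using norm1_adj[of n v c] assms code_verts by auto
  then show False
    using \<open>c \<in> C\<close> codeword_norm1_ne_1 codeword_norm1_ne_3 by blast
qed (use assms zero_in_code in \<open>simp_all add: gdist_eq_norm1\<close>)

lemma codeword_nbr_exchange: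
  assumes "x \<in> layer n C 2" "nbrs_in n x (layer n C 1) \<subseteq> {a, b, y}"
    and "x = p + q" "q \<in> verts n" "norm1 n q = 1" "d \<in> C" "adj n p d"
  shows "d \<in> {a - q, b - q, y - q}"
proof -
  have "adj n x (d + q)" "adj n (d + q) d"
    using assms(3,5,7) by (simp_all add: adj_iff_norm1)
  moreover have "d + q \<in> verts n"
    using assms(4,6) code_verts by simp
  ultimately have "d + q \<in> nbrs_in n x (layer n C 1)"
    using adj_codeword_imp_layer_1 assms(6) by (simp add: nbrs_in_def)
  then show ?thesis
    using assms(2) by (auto simp: algebra_simps)
qed

text \<open>With \<open>a = s e\<^sub>k\<close> and \<open>b = \<sigma> e\<^sub>j\<close>, the vertex \<open>a + b\<close> lies in \<open>C\<^sub>2\<close> with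
  \<open>C\<^sub>1\<close>-neighbours \<open>a\<close>, \<open>b\<close>, \<open>2a + b\<close>; since \<open>a\<close> has the two codeword neighbours \<open>0\<close> and \<open>2a\<close>,
  \<open>b\<close> has a second codeword neighbour, which the exchange step identifies as \<open>b - a\<close>.\<close>
lemma double_axis_in_code_imp_diff_in_code:
  assumes k: "k < n" "\<bar>s\<bar> = 1" and j: "j < n" "j \<noteq> k" and \<sigma>: "\<bar>\<sigma>\<bar> = 1"
    and c: "axis k (2 * s) \<in> C"
  shows "axis j \<sigma> - axis k s \<in> C"
proof -
  let ?a = "axis k s" and ?b = "axis j \<sigma>"
  let ?x = "?a + ?b" and ?y = "axis k (2 * s) + ?b"
  have "s \<noteq> 0" "\<sigma> \<noteq> 0"
    using k(2) \<sigma> by auto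
  have a1: "?a \<in> layer n C 1" and b1: "?b \<in> layer n C 1"
    using axis_in_layer_1 k j \<sigma> by simp_all
  have "?x \<noteq> axis k (2 * s)"
    by (rule apply_neq_imp_neq[of _ j]) (use j \<open>\<sigma> \<noteq> 0\<close> in \<open>simp add: axis_apply\<close>)
  then have x_not_C: "?x \<notin> C"
    using axis_codeword_nbrs_eq[OF k, of ?x "axis k (2 * s)"] c j k \<sigma> \<open>s \<noteq> 0\<close>
    by (auto simp: adj_iff_norm1)
  have x2: "?x \<in> layer n C 2"
    using norm1_2_imp_layer_2 x_not_C j k \<sigma> by (simp add: norm1_axis_add_axis)
  have "distinct [?a, ?b, ?y]"
    by (rule distinct_if_distinct_map[of "\<lambda>v. (v k, v j)"])
      (use j \<open>s \<noteq> 0\<close> \<open>\<sigma> \<noteq> 0\<close> in \<open>simp add: axis_apply\<close>)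
  moreover have "{?a, ?b, ?y} \<subseteq> nbrs_in n ?x (layer n C 1)"
    using a1 b1 adj_codeword_imp_layer_1[of ?y "axis k (2 * s)"] c j k \<sigma>
    by (simp add: nbrs_in_def adj_iff_norm1)
  ultimately have x_nbrs: "nbrs_in n ?x (layer n C 1) = {?a, ?b, ?y}"
    by (rule layer_1_nbrs_of_layer_2[OF x2])
  obtain d where d: "d \<in> C" "adj n ?b d" "d \<noteq> 0"
  proof (rule second_codeword_nbr[OF a1 zero_in_code c _ _ _ b1 zero_in_code])
    show "0 \<noteq> axis k (2 * s)" "adj n ?a 0" "adj n ?a (axis k (2 * s))" "adj n ?b 0"
      using k j \<sigma> \<open>s \<noteq> 0\<close> by (simp_all add: adj_iff_norm1)
  qed
  have "d \<in> {?a - ?a, ?b - ?a, ?y - ?a}"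
    by (rule codeword_nbr_exchange[OF x2 equalityD1[OF x_nbrs] _ _ _ d(1,2)])
      (use k in \<open>simp_all add: algebra_simps\<close>)
  moreover have "?y - ?a = ?x"
    by (simp add: fun_eq_iff axis_apply)
  ultimately show ?thesis
    using d x_not_C by auto
qed

lemma double_axis_not_in_code:
  assumes k: "k < n" "\<bar>s\<bar> = 1"
  shows "axis k (2 * s) \<notin> C"
proof
  assume c: "axis k (2 * s) \<in> C"
  have "\<exists>j<n. j \<noteq> k"
    using two_le_n by (intro exI[of _ "if k = 0 then 1 else 0"]) auto
  then obtain j where j: "j < n" "j \<noteq> k"
    by blast
  have "axis j 1 - axis k s = axis j (- 1) - axis k s"
    using double_axis_in_code_imp_diff_in_code[OF k j _ c] j k
    by (intro axis_codeword_nbrs_eq[of k "- s"]) (simp_all add: adj_iff_norm1 diff_diff_eq)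
  then show False
    by simp
qed

lemma codeword_1_1_2_imp_1_1:
  assumes ijk: "i < n" "j < n" "k < n" "i \<noteq> j" "i \<noteq> k" "j \<noteq> k"
    and signs: "\<bar>si\<bar> = 1" "\<bar>sj\<bar> = 1" "\<bar>t\<bar> = 1"
    and c: "axis i si + axis j sj + axis k (2 * t) \<in> C"
  shows "axis i si + axis k t \<in> C"
proof (rule ccontr)
  let ?x = "axis i si + axis k t"
  let ?p = "axis i si + axis j sj + axis k t" and ?q = "axis i si + axis k (2 * t)"
  assume "?x \<notin> C"
  then have x2: "?x \<in> layer n C 2"
    using norm1_2_imp_layer_2 ijk signs by (simp add: norm1_axis_add_axis)
  have "si \<noteq> 0" "sj \<noteq> 0" "t \<noteq> 0"
    using signs by auto
  then have "distinct [axis i si, axis k t, ?p, ?q]"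
    by (intro distinct_if_distinct_map[of "\<lambda>v. (v i, v j, v k)"]) (use ijk in \<open>simp add: axis_apply\<close>)
  moreover have "?p + axis k t = axis i si + axis j sj + axis k (2 * t)"
    "?q + axis j sj = axis i si + axis j sj + axis k (2 * t)"
    by (simp_all add: fun_eq_iff axis_apply)
  then have "?p \<in> layer n C 1" "?q \<in> layer n C 1"
    using layer_1_if_add_axis_in_code c ijk signs by (metis verts_add axis_in_verts)+
  ultimately show False
    using no_four_layer_1_nbrs[OF x2, of "axis i si" "axis k t" ?p ?q] axis_in_layer_1 ijk signs
    by (simp add: nbrs_in_def adj_iff_norm1)
qed

lemma codeword_1_1_2_not_in_code:
  assumes ijk: "i < n" "j < n" "k < n" "i \<noteq> j" "i \<noteq> k" "j \<noteq> k"
    and signs: "\<bar>si\<bar> = 1" "\<bar>sj\<bar> = 1" "\<bar>t\<bar> = 1"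
  shows "axis i si + axis j sj + axis k (2 * t) \<notin> C"
proof
  assume c: "axis i si + axis j sj + axis k (2 * t) \<in> C"
  then have "axis j sj + axis i si + axis k (2 * t) \<in> C"
    by (simp add: add.commute)
  then have "axis i si + axis k t \<in> C" "axis j sj + axis k t \<in> C"
    using codeword_1_1_2_imp_1_1 c ijk signs by blast+
  moreover have "si \<noteq> 0" "sj \<noteq> 0"
    using signs by auto
  ultimately have "axis i si + axis k t = axis j sj + axis k t"
    by (intro axis_codeword_nbrs_eq[OF ijk(3) signs(3)]) (use ijk signs in \<open>simp_all add: adj_iff_norm1\<close>)
  with ijk \<open>si \<noteq> 0\<close> show False
    by simp
qed

text \<open>If \<open>a + u\<close> were a codeword, then \<open>c\<^sub>1 = 2\<close> and \<open>b\<close> has a codeword neighbour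
  \<open>d \<noteq> 0\<close>; the exchange step forces \<open>d = b - a\<close>, and then \<open>b + u \<in> C\<^sub>2\<close> has the four
  \<open>C\<^sub>1\<close>-neighbours \<open>b\<close>, \<open>u\<close>, \<open>a + b + u\<close> and \<open>d + u\<close>.\<close>
lemma axis_add_fresh_direction_not_in_code:
  assumes ijk: "i < n" "j < n" "k < n" "i \<noteq> j" "i \<noteq> k" "j \<noteq> k"
    and signs: "\<bar>si\<bar> = 1" "\<bar>sj\<bar> = 1" "\<bar>t\<bar> = 1"
    and x2: "axis i si + axis j sj \<in> layer n C 2"
    and nbrs: "nbrs_in n (axis i si + axis j sj) (layer n C 1)
               = {axis i si, axis j sj, axis i si + axis j sj + axis k t}"
  shows "axis i si + axis k t \<notin> C"
proof
  let ?a = "axis i si" and ?b = "axis j sj" and ?u = "axis k t"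
  assume au: "?a + ?u \<in> C"
  have "si \<noteq> 0" "sj \<noteq> 0" "t \<noteq> 0"
    using signs by auto
  have a1: "?a \<in> layer n C 1" and b1: "?b \<in> layer n C 1" and u1: "?u \<in> layer n C 1"
    using axis_in_layer_1 ijk signs by simp_all
  have bu: "?b + ?u \<notin> C"
  proof
    assume "?b + ?u \<in> C"
    then have "?a + ?u = ?b + ?u"
      by (intro axis_codeword_nbrs_eq[OF ijk(3) signs(3) au])
        (use ijk signs \<open>si \<noteq> 0\<close> \<open>sj \<noteq> 0\<close> in \<open>simp_all add: adj_iff_norm1\<close>)
    with ijk \<open>si \<noteq> 0\<close> show False
      by simp
  qed
  have "?a + ?u \<noteq> 0"
    using ijk \<open>si \<noteq> 0\<close> by simp
  then obtain d where d: "d \<in> C" "adj n ?b d" "d \<noteq> 0"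
    using second_codeword_nbr[OF a1 zero_in_code au _ _ _ b1 zero_in_code] ijk signs
    by (auto simp: adj_iff_norm1)
  have "d \<in> {?a - ?a, ?b - ?a, ?a + ?b + ?u - ?a}"
    by (rule codeword_nbr_exchange[OF x2 equalityD1[OF nbrs] _ _ _ d(1,2)])
      (use ijk signs in \<open>simp_all add: algebra_simps\<close>)
  then have d_eq: "d = ?b - ?a"
    using d bu by (auto simp: algebra_simps)
  have x'2: "?b + ?u \<in> layer n C 2"
    using norm1_2_imp_layer_2 bu ijk signs by (simp add: norm1_axis_add_axis)
  have "?a + ?b + ?u \<in> nbrs_in n (?b + ?u) (layer n C 1)"
    using nbrs ijk signs by (auto simp: nbrs_in_def adj_iff_norm1)
  moreover have "d + ?u \<in> nbrs_in n (?b + ?u) (layer n C 1)"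
    using adj_codeword_imp_layer_1[OF _ d(1), of "d + ?u"] d(1,2) code_verts ijk signs
    by (simp add: nbrs_in_def adj_iff_norm1)
  moreover have "distinct [?b, ?u, ?a + ?b + ?u, d + ?u]"
    by (rule distinct_if_distinct_map[of "\<lambda>v. (v i, v j, v k)"])
      (use ijk \<open>si \<noteq> 0\<close> \<open>sj \<noteq> 0\<close> \<open>t \<noteq> 0\<close> in \<open>simp add: d_eq axis_apply\<close>)
  ultimately show False
    using no_four_layer_1_nbrs[OF x'2, of ?b ?u "?a + ?b + ?u" "d + ?u"] b1 u1 ijk signs
    by (simp add: nbrs_in_def adj_iff_norm1)
qed

lemma axis_add_third_direction_not_in_code:
  assumes ij: "i < n" "j < n" "k < n" "i \<noteq> j"
    and signs: "\<bar>si\<bar> = 1" "\<bar>sj\<bar> = 1" "\<bar>t\<bar> = 1"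
    and no_cancel: "k = i \<Longrightarrow> t = si" "k = j \<Longrightarrow> t = sj"
    and x2: "axis i si + axis j sj \<in> layer n C 2"
    and nbrs: "nbrs_in n (axis i si + axis j sj) (layer n C 1)
               = {axis i si, axis j sj, axis i si + axis j sj + axis k t}"
  shows "axis i si + axis k t \<notin> C"
proof (cases "k = i \<or> k = j")
  case True
  then show ?thesis
  proof
    assume "k = i"
    then show ?thesis
      using double_axis_not_in_code ij signs no_cancel by simp
  next
    assume "k = j"
    then show ?thesis
      using x2 no_cancel by (simp add: mem_layer_2_iff)
  qed
next
  case False
  then show ?thesis
    using axis_add_fresh_direction_not_in_code assms by simp
qed

lemma layer_2_1_1_nbrs:
  assumes ij: "i < n" "j < n" "i \<noteq> j" and signs: "\<bar>si\<bar> = 1" "\<bar>sj\<bar> = 1"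
    and x2: "axis i si + axis j sj \<in> layer n C 2"
  obtains k t where "k < n" "\<bar>t\<bar> = 1" "k = i \<Longrightarrow> t = si" "k = j \<Longrightarrow> t = sj"
    "nbrs_in n (axis i si + axis j sj) (layer n C 1)
     = {axis i si, axis j sj, axis i si + axis j sj + axis k t}"
proof -
  let ?a = "axis i si" and ?b = "axis j sj"
  have ab: "{?a, ?b} \<subseteq> nbrs_in n (?a + ?b) (layer n C 1)"
    using axis_in_layer_1 ij signs by (simp add: nbrs_in_def adj_iff_norm1)
  obtain y where y: "y \<in> nbrs_in n (?a + ?b) (layer n C 1)" "y \<noteq> ?a" "y \<noteq> ?b"
    using third_layer_1_nbr[OF x2] by blast
  then obtain k t where kt: "k < n" "\<bar>t\<bar> = 1" "y = ?a + ?b + axis k t"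
    using adjE[of n "?a + ?b" y] ij by (auto simp: nbrs_in_def)
  have "t = si" if "k = i"
  proof (rule ccontr)
    assume "t \<noteq> si"
    with that signs kt(2) have "y = ?b"
      by (auto simp: kt(3) fun_eq_iff axis_apply abs_if split: if_splits)
    with y(3) show False ..
  qed
  moreover have "t = sj" if "k = j"
  proof (rule ccontr)
    assume "t \<noteq> sj"
    with that signs kt(2) have "y = ?a"
      by (auto simp: kt(3) fun_eq_iff axis_apply abs_if split: if_splits)
    with y(2) show False ..
  qed
  moreover have "?a \<noteq> ?b"
    using ij signs by auto
  then have "distinct [?a, ?b, y]"
    using y(2,3) by auto
  then have "nbrs_in n (?a + ?b) (layer n C 1) = {?a, ?b, y}"
    using layer_1_nbrs_of_layer_2[OF x2] ab y(1) by simp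
  ultimately show ?thesis
    using that kt by blast
qed

lemma codeword_nbr_of_third_nbr:
  assumes ij: "i < n" "j < n" "k < n" "i \<noteq> j"
    and signs: "\<bar>si\<bar> = 1" "\<bar>sj\<bar> = 1" "\<bar>t\<bar> = 1"
    and no_cancel: "k = i \<Longrightarrow> t = si" "k = j \<Longrightarrow> t = sj"
    and x2: "axis i si + axis j sj \<in> layer n C 2"
    and nbrs: "nbrs_in n (axis i si + axis j sj) (layer n C 1)
               = {axis i si, axis j sj, axis i si + axis j sj + axis k t}"
    and c: "c \<in> C" "adj n (axis i si + axis j sj + axis k t) c"
  shows "c = axis i si + axis j sj + axis k (2 * t)"
proof -
  let ?a = "axis i si" and ?b = "axis j sj" and ?u = "axis k t"
  have "?a + ?u \<notin> C"
    using axis_add_third_direction_not_in_code assms by blast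
  moreover have "axis j sj + axis i si \<in> layer n C 2"
    "nbrs_in n (?b + ?a) (layer n C 1) = {?b, ?a, ?b + ?a + ?u}"
    using x2 nbrs by (simp_all add: add.commute insert_commute)
  then have "?b + ?u \<notin> C"
    using axis_add_third_direction_not_in_code[of j i k sj si t] ij signs no_cancel by simp
  moreover have "c \<in> {?a - axis k (- t), ?b - axis k (- t), ?a + ?b + ?u - axis k (- t)}"
    by (rule codeword_nbr_exchange[OF x2 equalityD1[OF nbrs] _ _ _ c]) (use ij signs in simp_all)
  moreover have "?a - axis k (- t) = ?a + ?u" "?b - axis k (- t) = ?b + ?u"
    "?a + ?b + ?u - axis k (- t) = ?a + ?b + axis k (2 * t)"
    by (simp_all add: fun_eq_iff axis_apply)
  ultimately show ?thesis
    using c(1) by auto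
qed

lemma weight_4_codewords_at_distance_2:
  assumes ij: "i < n" "j < n" "k < n" "i \<noteq> j"
    and signs: "\<bar>si\<bar> = 1" "\<bar>sj\<bar> = 1" "\<bar>t\<bar> = 1"
    and no_cancel: "k = i \<Longrightarrow> t = si" "k = j \<Longrightarrow> t = sj"
    and x2: "axis i si + axis j sj \<in> layer n C 2"
    and nbrs: "nbrs_in n (axis i si + axis j sj) (layer n C 1)
               = {axis i si, axis j sj, axis i si + axis j sj + axis k t}"
  shows "{c \<in> C. weight n c = 4 \<and> gdist n (axis i si + axis j sj) c = 2}
         = {axis i si + axis j sj + axis k (2 * t)}"
proof -
  let ?a = "axis i si" and ?b = "axis j sj"
  let ?x = "?a + ?b" and ?y = "?a + ?b + axis k t" and ?c = "?a + ?b + axis k (2 * t)"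
  have y_nbr: "c = ?c" if "c \<in> C" "adj n ?y c" for c
    using codeword_nbr_of_third_nbr[OF assms that] .
  have "?y \<in> layer n C 1"
    using nbrs by (auto simp: nbrs_in_def)
  then have c_in: "?c \<in> C"
    using y_nbr unfolding mem_layer_1_iff by blast
  have "norm1 n ?c = 4"
    using ij signs no_cancel
    by (cases "k = i"; cases "k = j") (simp_all add: norm1_add_axis axis_apply abs_mult)
  moreover have x_minus_c: "?x - ?c = axis k (- (2 * t))"
    by (simp add: fun_eq_iff axis_apply)
  have "gdist n ?x ?c = 2"
    unfolding gdist_eq_norm1 x_minus_c using ij signs by (simp add: abs_mult)
  ultimately have "?c \<in> {c \<in> C. weight n c = 4 \<and> gdist n ?x c = 2}"
    using c_in by (simp add: weight_eq_norm1)
  moreover have "c = ?c" if c: "c \<in> C" "weight n c = 4" "gdist n ?x c = 2" for c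
  proof -
    obtain z where z: "z \<in> verts n" "adj n ?x z" "adj n z c"
      using gdist_eq_2_midpoint[OF c(3)] code_verts[OF c(1)] ij by auto
    then have "z \<in> {?a, ?b, ?y}"
      using nbrs adj_codeword_imp_layer_1[OF z(1) c(1) z(3)] by (auto simp: nbrs_in_def)
    moreover have "norm1 n z \<noteq> 1"
      using norm1_adj[OF z(3) z(1) code_verts[OF c(1)]] c(2) norm1_nonneg[of n c]
      by (auto simp: weight_eq_norm1)
    ultimately show ?thesis
      using y_nbr c(1) z(3) ij signs by auto
  qed
  ultimately show ?thesis
    by blast
qed

lemma codeword_1_1_plus_2_type3100:
  assumes ij: "i < n" "j < n" "k < n" "i \<noteq> j"
    and signs: "\<bar>si\<bar> = 1" "\<bar>sj\<bar> = 1" "\<bar>t\<bar> = 1"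
    and no_cancel: "k = i \<Longrightarrow> t = si" "k = j \<Longrightarrow> t = sj"
    and c: "axis i si + axis j sj + axis k (2 * t) \<in> C"
  shows "type3100 n (axis i si + axis j sj + axis k (2 * t))"
proof -
  have "k = i \<or> k = j"
    using codeword_1_1_2_not_in_code ij signs c by blast
  then show ?thesis
  proof
    assume "k = i"
    then have "axis i si + axis j sj + axis k (2 * t) = axis i (3 * si) + axis j sj"
      using no_cancel by (simp add: fun_eq_iff axis_apply)
    then show ?thesis
      using type3100_axis_3_1[OF ij(1,2,4) signs(1,2)] by (simp only:)
  next
    assume "k = j"
    then have "axis i si + axis j sj + axis k (2 * t) = axis j (3 * sj) + axis i si"
      using no_cancel by (simp add: fun_eq_iff axis_apply)
    then show ?thesis
      using type3100_axis_3_1[OF ij(2,1) ij(4)[symmetric] signs(2,1)] by (simp only:)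
  qed
qed

lemma type1100_layer_2_unique_weight_4_codeword:
  assumes x: "type1100 n x" "x \<in> layer n C 2"
  obtains c where "{c \<in> C. weight n c = 4 \<and> gdist n x c = 2} = {c}" "type3100 n c"
proof -
  obtain i j si sj where ij: "i < n" "j < n" "i \<noteq> j" "\<bar>si\<bar> = 1" "\<bar>sj\<bar> = 1"
    and x_eq: "x = axis i si + axis j sj"
    using type1100E[OF x(1)] .
  obtain k t where kt: "k < n" "\<bar>t\<bar> = 1" "k = i \<Longrightarrow> t = si" "k = j \<Longrightarrow> t = sj"
    and nbrs: "nbrs_in n x (layer n C 1) = {axis i si, axis j sj, x + axis k t}"
    using layer_2_1_1_nbrs[OF ij x(2)[unfolded x_eq]] unfolding x_eq by blast
  have codewords: "{c \<in> C. weight n c = 4 \<and> gdist n x c = 2} = {x + axis k (2 * t)}"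
    using weight_4_codewords_at_distance_2[OF ij(1,2) kt(1) ij(3-5) kt(2-4)] x(2) nbrs
    unfolding x_eq by blast
  then have "type3100 n (x + axis k (2 * t))"
    using codeword_1_1_plus_2_type3100[OF ij(1,2) kt(1) ij(3-5) kt(2-4)] unfolding x_eq by blast
  with codewords show ?thesis
    using that by blast
qed

end

lemma cap_eq:
  "cap n i \<epsilon> = {axis i (3 * \<epsilon>) + axis j s | j s. j < n \<and> j \<noteq> i \<and> \<bar>s\<bar> = 1}"
proof -
  have "(\<lambda>k. \<epsilon> * 3 * unitv i k + s * unitv j k) = axis i (3 * \<epsilon>) + axis j s" for j s
    by (simp add: fun_eq_iff unitv_def axis_apply)
  moreover have "(s = 1 \<or> s = -1) \<longleftrightarrow> \<bar>s\<bar> = 1" for s :: int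
    by auto
  ultimately show ?thesis
    unfolding cap_def by simp
qed

lemma finite_cap: "finite (cap n i \<epsilon>)"
proof -
  have "cap n i \<epsilon> \<subseteq> (\<lambda>(j, s). axis i (3 * \<epsilon>) + axis j s) ` ({..<n} \<times> {1, -1})"
    unfolding cap_eq by (auto simp: abs_if split: if_splits)
  then show ?thesis
    by (rule finite_subset) simp
qed

lemma type3100_in_cap:
  assumes "type3100 n x"
  obtains i \<epsilon> where "i < n" "\<epsilon> \<in> {1, -1}" "x \<in> cap n i \<epsilon>"
proof -
  obtain i j where ij: "i < n" "j < n" "i \<noteq> j" "\<bar>x i\<bar> = 3" "\<bar>x j\<bar> = 1"
    and zero: "\<forall>m. m \<noteq> i \<and> m \<noteq> j \<longrightarrow> x m = 0"
    using assms unfolding type3100_def by blast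
  have "x = axis i (3 * sgn (x i)) + axis j (x j)"
    using ij zero by (auto simp: fun_eq_iff axis_apply sgn_if abs_if split: if_splits)
  then have "x \<in> cap n i (sgn (x i))"
    unfolding cap_eq using ij by blast
  moreover have "sgn (x i) \<in> {1, -1}"
    using ij(4) by (auto simp: sgn_if)
  ultimately show ?thesis
    using that ij(1) by blast
qed

context two_null_crc
begin

lemma card_cap_inter_code_le_1:
  assumes i: "i < n" and \<epsilon>: "\<bar>\<epsilon>\<bar> = 1"
  shows "card (cap n i \<epsilon> \<inter> C) \<le> 1"
proof -
  have "p = q" if p: "p \<in> cap n i \<epsilon> \<inter> C" and q: "q \<in> cap n i \<epsilon> \<inter> C" for p q
  proof (rule ccontr)
    assume "p \<noteq> q"
    obtain j s where js: "j < n" "j \<noteq> i" "\<bar>s\<bar> = 1" "p = axis i (3 * \<epsilon>) + axis j s"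
      using p unfolding cap_eq by blast
    obtain j' s' where js': "j' < n" "j' \<noteq> i" "\<bar>s'\<bar> = 1" "q = axis i (3 * \<epsilon>) + axis j' s'"
      using q unfolding cap_eq by blast
    let ?x = "axis i (2 * \<epsilon>)"
    have x2: "?x \<in> layer n C 2"
      using norm1_2_imp_layer_2 double_axis_not_in_code i \<epsilon> by (simp add: abs_mult)
    have p_eq: "p = ?x + axis j s + axis i \<epsilon>" "p = axis i (3 * \<epsilon>) + axis j s"
      and q_eq: "q = ?x + axis j' s' + axis i \<epsilon>"
      using js(4) js'(4) by (simp_all add: fun_eq_iff axis_apply)
    have "?x + axis j s \<in> layer n C 1"
      by (rule layer_1_if_add_axis_in_code[where k = i and s = \<epsilon>]) (use p p_eq(1) i \<epsilon> js in simp_all)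
    moreover have "?x + axis j' s' \<in> layer n C 1"
      by (rule layer_1_if_add_axis_in_code[where k = i and s = \<epsilon>]) (use q q_eq i \<epsilon> js' in simp_all)
    moreover have "axis i (3 * \<epsilon>) \<in> layer n C 1"
      by (rule layer_1_if_add_axis_in_code[where k = j and s = s]) (use p p_eq(2) i js in simp_all)
    ultimately have l1: "{?x + axis j s, ?x + axis j' s', axis i (3 * \<epsilon>)} \<subseteq> layer n C 1"
      by simp
    have "\<epsilon> \<noteq> 0"
      using \<epsilon> by auto
    then have "distinct [axis i \<epsilon>, axis i (3 * \<epsilon>), ?x + axis j s]"
      "distinct [axis i \<epsilon>, axis i (3 * \<epsilon>), ?x + axis j' s']"
      using js(2) js'(2) by (intro distinct_if_distinct_map[of "\<lambda>v. v i"], simp add: axis_apply)+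
    moreover have "?x + axis j s \<noteq> ?x + axis j' s'"
      using \<open>p \<noteq> q\<close> p_eq(1) q_eq by auto
    ultimately have "distinct [axis i \<epsilon>, axis i (3 * \<epsilon>), ?x + axis j s, ?x + axis j' s']"
      by auto
    then show False
      using no_four_layer_1_nbrs[OF x2, of "axis i \<epsilon>" "axis i (3 * \<epsilon>)" "?x + axis j s" "?x + axis j' s'"]
        l1 axis_in_layer_1 i \<epsilon> js js'
      by (simp add: nbrs_in_def adj_iff_norm1)
  qed
  then show ?thesis
    using card_le_Suc0_iff_eq[of "cap n i \<epsilon> \<inter> C"] finite_cap by auto
qed
lemma card_type3100_codewords_le: "card {x \<in> C. type3100 n x} \<le> 2 * n"
proof -
  let ?I = "{..<n} \<times> {1, -1 :: int}"
  have "{x \<in> C. type3100 n x} \<subseteq> (\<Union>p\<in>?I. cap n (fst p) (snd p) \<inter> C)"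
  proof
    fix x assume x: "x \<in> {x \<in> C. type3100 n x}"
    then obtain i \<epsilon> where "i < n" "\<epsilon> \<in> {1, -1}" "x \<in> cap n i \<epsilon>"
      using type3100_in_cap by blast
    with x show "x \<in> (\<Union>p\<in>?I. cap n (fst p) (snd p) \<inter> C)"
      by (intro UN_I[of "(i, \<epsilon>)"]) auto
  qed
  then have "card {x \<in> C. type3100 n x} \<le> card (\<Union>p\<in>?I. cap n (fst p) (snd p) \<inter> C)"
    by (rule card_mono[rotated]) (auto simp: finite_cap)
  also have "\<dots> \<le> (\<Sum>p\<in>?I. card (cap n (fst p) (snd p) \<inter> C))"
    by (rule card_UN_le) simp
  also have "\<dots> \<le> (\<Sum>p\<in>?I. 1)"
    by (rule sum_mono) (use card_cap_inter_code_le_1 in auto)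
  also have "\<dots> = 2 * n"
    by (simp add: card_cartesian_product)
  finally show ?thesis .
qed

end

theorem mainTheorem4:
  fixes n \<rho> :: nat and C :: "(nat \<Rightarrow> int) set" and \<alpha> :: "nat \<Rightarrow> nat \<Rightarrow> nat"
  assumes "n \<ge> 2"
    and "is_CRC n C \<rho> \<alpha>"
    and "r_null 2 \<alpha>"
    and "\<rho> \<ge> 2"
    and "\<alpha> 1 0 \<le> 2"
    and "\<alpha> 2 1 = 3"
    and "zerov \<in> C"
  shows "(\<forall>i<n. \<forall>\<epsilon>\<in>{1, -1}. card (cap n i \<epsilon> \<inter> C) \<le> 1)
       \<and> card {x \<in> C. type3100 n x} \<le> 2 * n
       \<and> (\<forall>x. type1100 n x \<and> x \<in> layer n C 2 \<longrightarrow>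
            (\<exists>!c. c \<in> C \<and> weight n c = 4 \<and> gdist n x c = 2) \<and>
            (\<forall>c. c \<in> C \<and> weight n c = 4 \<and> gdist n x c = 2 \<longrightarrow> type3100 n c))"
proof -
  interpret two_null_crc n C \<alpha>
    by unfold_locales (use assms in \<open>auto simp: is_CRC_def r_null_def zerov_eq_0 nbrs_in_def\<close>)
  have "(\<exists>!c. c \<in> C \<and> weight n c = 4 \<and> gdist n x c = 2) \<and>
        (\<forall>c. c \<in> C \<and> weight n c = 4 \<and> gdist n x c = 2 \<longrightarrow> type3100 n c)"
    if x: "type1100 n x" "x \<in> layer n C 2" for x
  proof -
    obtain c where "{c \<in> C. weight n c = 4 \<and> gdist n x c = 2} = {c}" "type3100 n c"
      using type1100_layer_2_unique_weight_4_codeword[OF x] .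
    then show ?thesis
      by (auto simp: set_eq_iff)
  qed
  then show ?thesis
    using card_cap_inter_code_le_1 card_type3100_codewords_le by auto
qed

end
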